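(* Let $X=[0,1]^d$, let $Y$ be a convex subset of a finite-dimensional normed space with norm $\|\cdot\|_Y$, let $\mathcal{M}\subset X$ be a compact smooth embedded manifold, $\rho$ a probability density on $\mathcal{M}$, and $y:X\to Y$ the label function. Let $\ell:Y\times Y\to\mathbb{R}$ be strongly convex with parameter $\theta>0$, i.e. $\ell(ty_1+(1-t)y_2,y_0)+\tfrac{\theta}{2}t(1-t)\|y_1-y_2\|_Y^2\le t\ell(y_1,y_0)+(1-t)\ell(y_2,y_0)$ for all $y_0,y_1,y_2\in Y$, $t\in[0,1]$. Fix $\lambda>0$ and let $J[u]=\int_{\mathcal{M}}\ell(u(x),y(x))\rho\,dVol(x)+\lambda\,\mathrm{Lip}(u)$. If $u^\lambda\in W^{1,\infty}(X;Y)$ is a minimizer of $J$ and $u\in W^{1,\infty}(X;Y)$, then $$\frac{\theta}{2}\int_{\mathcal{M}}\|u-u^\lambda\|_Y^2\rho\,dVol(x)\le J[u]-J[u^\lambda].$$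
   Context: $W^{1,\infty}(X;Y)$ is the space of Lipschitz maps $X\to Y$; $\mathrm{Lip}(u)$ is the Lipschitz constant of $u$. *)

theory Defs
  imports "HOL-Analysis.Analysis" "HOL-Probability.Probability"
begin

definition unit_cube :: "(real^'d) set" where
  "unit_cube = {x. \<forall>i. 0 \<le> x $ i \<and> x $ i \<le> 1}"

definition W1inf :: "'a::metric_space set \<Rightarrow> 'b::metric_space set \<Rightarrow> ('a \<Rightarrow> 'b) set" where
  "W1inf X Y = {u. u ` X \<subseteq> Y \<and> (\<exists>L. L-lipschitz_on X u)}"

definition Lip :: "'a::metric_space set \<Rightarrow> ('a \<Rightarrow> 'b::metric_space) \<Rightarrow> real" where
  "Lip X u = Inf {L. L-lipschitz_on X u}"

definition strongly_convex_loss ::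
  "'b::real_normed_vector set \<Rightarrow> real \<Rightarrow> ('b \<Rightarrow> 'b \<Rightarrow> real) \<Rightarrow> bool" where
  "strongly_convex_loss Y \<theta> loss \<longleftrightarrow>
     (\<forall>y0\<in>Y. \<forall>y1\<in>Y. \<forall>y2\<in>Y. \<forall>t::real. 0 \<le> t \<and> t \<le> 1 \<longrightarrow>
        loss (t *\<^sub>R y1 + (1 - t) *\<^sub>R y2) y0 + \<theta> / 2 * t * (1 - t) * (norm (y1 - y2))\<^sup>2
          \<le> t * loss y1 y0 + (1 - t) * loss y2 y0)"

text \<open>The functional J[u] = int_M l(u(x),y(x)) rho dVol + lambda Lip(u), where
  mu = density vol rho is the measure rho dVol on M.\<close>
definition Jfun :: "'a::metric_space set \<Rightarrow> 'a measure \<Rightarrow> ('b::metric_space \<Rightarrow> 'b \<Rightarrow> real)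
      \<Rightarrow> ('a \<Rightarrow> 'b) \<Rightarrow> real \<Rightarrow> ('a \<Rightarrow> 'b) \<Rightarrow> real" where
  "Jfun X \<mu> loss ylab lam u = (\<integral>x. loss (u x) (ylab x) \<partial>\<mu>) + lam * Lip X u"

end

theory Submission
  imports Defs
begin

text \<open>Along the segment \<open>t u + (1 - t) u\<^sup>\<lambda>\<close> the functional \<open>J\<close> is \<open>\<theta>\<close>-strongly convex: the
  data term because \<open>\<ell>\<close> is, and \<open>Lip\<close> because it is a seminorm. Comparing \<open>J[u\<^sup>\<lambda>]\<close> with the
  value of \<open>J\<close> at the point with parameter \<open>t\<close>, dividing by \<open>t\<close> and letting \<open>t \<rightarrow> 0\<close> gives the
  claimed quadratic growth of \<open>J\<close> away from its minimiser.\<close>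

lemma Lip_lipschitz_on:
  assumes "L-lipschitz_on X u"
  shows "(Lip X u)-lipschitz_on X u"
proof -
  have ne: "{L. L-lipschitz_on X u} \<noteq> {}" using assms by blast
  show ?thesis
  proof (rule lipschitz_onI)
    fix x y assume xy: "x \<in> X" "y \<in> X"
    show "dist (u x) (u y) \<le> Lip X u * dist x y"
    proof (cases "x = y")
      case False
      then have dp: "dist x y > 0" by simp
      have "dist (u x) (u y) / dist x y \<le> Lip X u" unfolding Lip_def
      proof (rule cInf_greatest[OF ne])
        fix L assume "L \<in> {L. L-lipschitz_on X u}"
        then have "dist (u x) (u y) \<le> L * dist x y" using xy by (auto simp: lipschitz_on_def)
        then show "dist (u x) (u y) / dist x y \<le> L" using dp by (simp add: divide_le_eq)
      qed
      then show ?thesis using dp by (simp add: divide_le_eq)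
    qed simp
  next
    show "0 \<le> Lip X u" unfolding Lip_def
      by (rule cInf_greatest[OF ne]) (auto simp: lipschitz_on_def)
  qed
qed

lemma Lip_le:
  assumes "L-lipschitz_on X u"
  shows "Lip X u \<le> L"
  unfolding Lip_def
  by (rule cInf_lower) (use assms in \<open>auto intro!: bdd_belowI[of _ 0] simp: lipschitz_on_def\<close>)

lemma lipschitz_on_convex_combination:
  fixes u w :: "'a::metric_space \<Rightarrow> 'b::real_normed_vector"
  assumes "L-lipschitz_on X u" "K-lipschitz_on X w" "0 \<le> t" "t \<le> 1"
  shows "(t * L + (1 - t) * K)-lipschitz_on X (\<lambda>x. t *\<^sub>R u x + (1 - t) *\<^sub>R w x)"
  using assms by (intro lipschitz_on_add lipschitz_on_cmult_nonneg) auto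

lemma Lip_convex_combination_le:
  fixes u w :: "'a::metric_space \<Rightarrow> 'b::real_normed_vector"
  assumes "L-lipschitz_on X u" "K-lipschitz_on X w" "0 \<le> t" "t \<le> 1"
  shows "Lip X (\<lambda>x. t *\<^sub>R u x + (1 - t) *\<^sub>R w x) \<le> t * Lip X u + (1 - t) * Lip X w"
  using assms by (intro Lip_le lipschitz_on_convex_combination Lip_lipschitz_on)

lemma W1inf_convex_combination:
  fixes u w :: "'a::metric_space \<Rightarrow> 'b::real_normed_vector"
  assumes "convex Y" "u \<in> W1inf X Y" "w \<in> W1inf X Y" "0 \<le> t" "t \<le> 1"
  shows "(\<lambda>x. t *\<^sub>R u x + (1 - t) *\<^sub>R w x) \<in> W1inf X Y"
proof -
  obtain L K where "L-lipschitz_on X u" "K-lipschitz_on X w" "u ` X \<subseteq> Y" "w ` X \<subseteq> Y"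
    using assms(2,3) by (auto simp: W1inf_def)
  with assms(1,4,5) show ?thesis
    unfolding W1inf_def
    by (auto intro: lipschitz_on_convex_combination convexD simp: image_subset_iff)
qed

lemma integral_strongly_convex_loss_le:
  fixes u w ylab :: "'a \<Rightarrow> 'b::real_normed_vector"
  assumes loss: "strongly_convex_loss Y \<theta> loss"
    and Y: "\<And>x. x \<in> space \<mu> \<Longrightarrow> u x \<in> Y \<and> w x \<in> Y \<and> ylab x \<in> Y"
    and int_v: "integrable \<mu> (\<lambda>x. loss (t *\<^sub>R u x + (1 - t) *\<^sub>R w x) (ylab x))"
    and int_u: "integrable \<mu> (\<lambda>x. loss (u x) (ylab x))"
    and int_w: "integrable \<mu> (\<lambda>x. loss (w x) (ylab x))"
    and int_dist: "integrable \<mu> (\<lambda>x. (norm (u x - w x))\<^sup>2)"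
    and t: "0 \<le> t" "t \<le> 1"
  shows "(\<integral>x. loss (t *\<^sub>R u x + (1 - t) *\<^sub>R w x) (ylab x) \<partial>\<mu>)
           + \<theta> / 2 * t * (1 - t) * (\<integral>x. (norm (u x - w x))\<^sup>2 \<partial>\<mu>)
         \<le> t * (\<integral>x. loss (u x) (ylab x) \<partial>\<mu>) + (1 - t) * (\<integral>x. loss (w x) (ylab x) \<partial>\<mu>)"
proof -
  have "(\<integral>x. loss (t *\<^sub>R u x + (1 - t) *\<^sub>R w x) (ylab x)
               + \<theta> / 2 * t * (1 - t) * (norm (u x - w x))\<^sup>2 \<partial>\<mu>)
      \<le> (\<integral>x. t * loss (u x) (ylab x) + (1 - t) * loss (w x) (ylab x) \<partial>\<mu>)"
    using int_v int_u int_w int_dist loss Y t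
    by (intro integral_mono) (auto simp: strongly_convex_loss_def)
  with int_v int_u int_w int_dist show ?thesis by simp
qed

lemma Jfun_strongly_convex:
  fixes u w ylab :: "'a::metric_space \<Rightarrow> 'b::real_normed_vector"
  assumes loss: "strongly_convex_loss Y \<theta> loss" and "convex Y"
    and \<mu>: "space \<mu> \<subseteq> X" and ylab: "ylab ` X \<subseteq> Y" and "0 \<le> lam"
    and int_loss: "\<And>v. v \<in> W1inf X Y \<Longrightarrow> integrable \<mu> (\<lambda>x. loss (v x) (ylab x))"
    and int_dist: "integrable \<mu> (\<lambda>x. (norm (u x - w x))\<^sup>2)"
    and u: "u \<in> W1inf X Y" and w: "w \<in> W1inf X Y" and t: "0 \<le> t" "t \<le> 1"
  shows "Jfun X \<mu> loss ylab lam (\<lambda>x. t *\<^sub>R u x + (1 - t) *\<^sub>R w x)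
           + \<theta> / 2 * t * (1 - t) * (\<integral>x. (norm (u x - w x))\<^sup>2 \<partial>\<mu>)
         \<le> t * Jfun X \<mu> loss ylab lam u + (1 - t) * Jfun X \<mu> loss ylab lam w"
proof -
  obtain L K where L: "L-lipschitz_on X u" and K: "K-lipschitz_on X w"
    and "u ` X \<subseteq> Y" "w ` X \<subseteq> Y"
    using u w by (auto simp: W1inf_def)
  with \<mu> ylab have Y: "u x \<in> Y \<and> w x \<in> Y \<and> ylab x \<in> Y" if "x \<in> space \<mu>" for x
    using that by blast
  have W1inf_convex: "(\<lambda>x. t *\<^sub>R u x + (1 - t) *\<^sub>R w x) \<in> W1inf X Y"
    using W1inf_convex_combination[OF \<open>convex Y\<close> u w t] .
  have "lam * Lip X (\<lambda>x. t *\<^sub>R u x + (1 - t) *\<^sub>R w x)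
      \<le> lam * (t * Lip X u + (1 - t) * Lip X w)"
    using Lip_convex_combination_le[OF L K t] \<open>0 \<le> lam\<close> by (rule mult_left_mono)
  moreover have "(\<integral>x. loss (t *\<^sub>R u x + (1 - t) *\<^sub>R w x) (ylab x) \<partial>\<mu>)
           + \<theta> / 2 * t * (1 - t) * (\<integral>x. (norm (u x - w x))\<^sup>2 \<partial>\<mu>)
         \<le> t * (\<integral>x. loss (u x) (ylab x) \<partial>\<mu>) + (1 - t) * (\<integral>x. loss (w x) (ylab x) \<partial>\<mu>)"
    using integral_strongly_convex_loss_le[OF loss Y int_loss[OF W1inf_convex]
        int_loss[OF u] int_loss[OF w] int_dist t] .
  ultimately show ?thesis by (simp add: Jfun_def algebra_simps)
qed

lemma gap_ge_of_strongly_convex_along_segment: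
  fixes Ju Jm \<theta> q :: real
  assumes "\<And>t. 0 < t \<Longrightarrow> t < 1 \<Longrightarrow> Jm + \<theta> / 2 * t * (1 - t) * q \<le> t * Ju + (1 - t) * Jm"
  shows "\<theta> / 2 * q \<le> Ju - Jm"
proof (rule field_le_mult_one_interval)
  fix s :: real assume s: "0 < s" "s < 1"
  have "(1 - s) * (s * (\<theta> / 2 * q)) \<le> (1 - s) * (Ju - Jm)"
    using assms[of "1 - s"] s by (simp add: algebra_simps)
  then show "s * (\<theta> / 2 * q) \<le> Ju - Jm" using s by simp
qed

theorem mainTheorem8:
  fixes Y :: "'b::real_normed_vector set"
    and M :: "(real^'d) set"
    and vol :: "(real^'d) measure"
    and \<rho> :: "real^'d \<Rightarrow> real"
    and ylab :: "real^'d \<Rightarrow> 'b"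
    and loss :: "'b \<Rightarrow> 'b \<Rightarrow> real"
    and \<theta> lam :: real
    and u ulam :: "real^'d \<Rightarrow> 'b"
  assumes findim: "\<exists>B::'b set. finite B \<and> span B = UNIV"
    and Yconv: "convex Y"
    and Mcompact: "compact M" and MX: "M \<subseteq> unit_cube"
    and vol_space: "space vol = M"
    and vol_sets: "sets vol = sets (restrict_space borel M)"
    and \<rho>_meas: "\<rho> \<in> borel_measurable vol"
    and \<rho>_nonneg: "\<And>x. x \<in> M \<Longrightarrow> 0 \<le> \<rho> x"
    and \<rho>_prob: "prob_space (density vol (\<lambda>x. ennreal (\<rho> x)))"
    and ylab_Y: "\<And>x. x \<in> unit_cube \<Longrightarrow> ylab x \<in> Y"
    and \<theta>_pos: "\<theta> > 0"
    and loss_sc: "strongly_convex_loss Y \<theta> loss"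
    and loss_int: "\<And>v. v \<in> W1inf unit_cube Y \<Longrightarrow>
        integrable (density vol (\<lambda>x. ennreal (\<rho> x))) (\<lambda>x. loss (v x) (ylab x))"
    and lam_pos: "lam > 0"
    and ulam_W: "ulam \<in> W1inf unit_cube Y"
    and ulam_min: "\<And>v. v \<in> W1inf unit_cube Y \<Longrightarrow>
        Jfun unit_cube (density vol (\<lambda>x. ennreal (\<rho> x))) loss ylab lam ulam
          \<le> Jfun unit_cube (density vol (\<lambda>x. ennreal (\<rho> x))) loss ylab lam v"
    and u_W: "u \<in> W1inf unit_cube Y"
  shows "\<theta> / 2 * (\<integral>x. (norm (u x - ulam x))\<^sup>2 \<partial>(density vol (\<lambda>x. ennreal (\<rho> x))))
     \<le> Jfun unit_cube (density vol (\<lambda>x. ennreal (\<rho> x))) loss ylab lam u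
        - Jfun unit_cube (density vol (\<lambda>x. ennreal (\<rho> x))) loss ylab lam ulam"
proof -
  define \<mu> where "\<mu> = density vol (\<lambda>x. ennreal (\<rho> x))"
  define J where "J = Jfun unit_cube \<mu> loss ylab lam"
  have gap_nonneg: "0 \<le> J u - J ulam" using ulam_min[OF u_W] by (simp add: J_def \<mu>_def)
  show ?thesis
  proof (cases "integrable \<mu> (\<lambda>x. (norm (u x - ulam x))\<^sup>2)")
    case False
    \<comment> \<open>then the integral is the junk value \<open>0\<close>\<close>
    then show ?thesis using gap_nonneg by (simp add: not_integrable_integral_eq J_def \<mu>_def)
  next
    case True
    have "space \<mu> \<subseteq> unit_cube" using MX by (simp add: \<mu>_def vol_space)
    moreover have "ylab ` unit_cube \<subseteq> Y" using ylab_Y by auto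
    ultimately have "J (\<lambda>x. t *\<^sub>R u x + (1 - t) *\<^sub>R ulam x)
        + \<theta> / 2 * t * (1 - t) * (\<integral>x. (norm (u x - ulam x))\<^sup>2 \<partial>\<mu>) \<le> t * J u + (1 - t) * J ulam"
      if "0 \<le> t" "t \<le> 1" for t
      using Jfun_strongly_convex[OF loss_sc Yconv _ _ _ _ True u_W ulam_W that] lam_pos loss_int
      by (simp add: J_def \<mu>_def)
    moreover have "J ulam \<le> J (\<lambda>x. t *\<^sub>R u x + (1 - t) *\<^sub>R ulam x)" if "0 \<le> t" "t \<le> 1" for t
      using ulam_min[OF W1inf_convex_combination[OF Yconv u_W ulam_W that]]
      by (simp add: J_def \<mu>_def)
    ultimately have "\<theta> / 2 * (\<integral>x. (norm (u x - ulam x))\<^sup>2 \<partial>\<mu>) \<le> J u - J ulam"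
      by (intro gap_ge_of_strongly_convex_along_segment) (meson add_right_mono less_imp_le order_trans)
    then show ?thesis by (simp add: J_def \<mu>_def)
  qed
qed

end
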